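(* Let $\mathbb{F}$ be any field and let $\pi,\sigma\in S_n$ be such that their permutation matrices are similar in $GL(n,\mathbb{F})$. Then for every integer $d\ge 1$, $m_d(\pi)=m_d(\sigma)$, where $m_d(\pi)$ denotes the number of cycles of $\pi$ whose length is divisible by $d$.
   Context: The permutation matrix $[\pi]$ of $\pi\in S_n$ is defined by $[\pi]_{i,j}=1$ if $i=\pi(j)$ and $0$ otherwise. Cycles include fixed points as cycles of length 1. *)

theory Defs
  imports "Jordan_Normal_Form.Matrix" "HOL-Combinatorics.Permutations"
begin

definition perm_mat :: "nat \<Rightarrow> (nat \<Rightarrow> nat) \<Rightarrow> 'a :: field mat" where
  "perm_mat n \<pi> = mat n n (\<lambda>(i, j). if i = \<pi> j then 1 else 0)"

definition perm_cycle :: "(nat \<Rightarrow> nat) \<Rightarrow> nat \<Rightarrow> nat set" where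
  "perm_cycle \<pi> x = {(\<pi> ^^ k) x | k. True}"

definition perm_cycles :: "nat \<Rightarrow> (nat \<Rightarrow> nat) \<Rightarrow> nat set set" where
  "perm_cycles n \<pi> = perm_cycle \<pi> ` {..<n}"

definition m_cycles :: "nat \<Rightarrow> nat \<Rightarrow> (nat \<Rightarrow> nat) \<Rightarrow> nat" where
  "m_cycles n d \<pi> = card {C \<in> perm_cycles n \<pi>. d dvd card C}"

end

(*
  Similar matrices have similar powers, and the kernel of [tau] - 1 is spanned by the
  indicator vectors of the cycles of tau; so in any characteristic the permutations pi^k and
  sigma^k have the same number of cycles, for every k.  A cycle of length c of pi splits into
  gcd c k cycles of pi^k, and gcd c k is the sum of totient e over the common divisors e of
  c and k; hence the number of cycles of pi^k is the sum of totient e * m_e(pi) over the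
  divisors e of k.  This triangular system has positive diagonal totient k, so it determines
  every m_d(pi) by strong induction on d.
*)

theory Submission
  imports Defs "HOL-Combinatorics.Orbits" "HOL-Combinatorics.Cycles" "HOL-Number_Theory.Totient"
    "Jordan_Normal_Form.Jordan_Normal_Form_Uniqueness"
begin

section \<open>Cycles of a permutation\<close>

lemma perm_cycle_eq_orbit: "permutation \<tau> \<Longrightarrow> perm_cycle \<tau> x = orbit \<tau> x"
  by (simp add: perm_cycle_def orbit_altdef_permutation)

lemma self_in_perm_cycle: "x \<in> perm_cycle \<tau> x"
  unfolding perm_cycle_def by (auto intro: exI[of _ 0])

lemma perm_cycle_eqI:
  assumes "permutation \<tau>" "y \<in> perm_cycle \<tau> x"
  shows "perm_cycle \<tau> y = perm_cycle \<tau> x"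
  using assms orbit_cyclic_eq3[OF cyclic_on_orbit'] by (simp add: perm_cycle_eq_orbit)

lemma mem_perm_cycle_iff:
  assumes "permutation \<tau>"
  shows "y \<in> perm_cycle \<tau> x \<longleftrightarrow> perm_cycle \<tau> y = perm_cycle \<tau> x"
  using perm_cycle_eqI[OF assms] self_in_perm_cycle by metis

lemma perm_cycle_apply:
  assumes "permutation \<tau>"
  shows "perm_cycle \<tau> (\<tau> x) = perm_cycle \<tau> x"
proof -
  have "\<tau> x = (\<tau> ^^ 1) x" by simp
  then have "\<tau> x \<in> perm_cycle \<tau> x" unfolding perm_cycle_def by blast
  then show ?thesis by (rule perm_cycle_eqI[OF assms])
qed

lemma perm_cycle_subset:
  assumes "\<tau> permutes S" "x \<in> S"
  shows "perm_cycle \<tau> x \<subseteq> S"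
  unfolding perm_cycle_def using permutes_in_image[OF permutes_funpow[OF assms(1)]] assms(2)
  by auto

lemma card_perm_cycle:
  assumes "permutation \<tau>"
  shows "card (perm_cycle \<tau> x) = funpow_dist1 \<tau> x x"
proof -
  have x: "x \<in> orbit \<tau> x" by (rule permutation_self_in_orbit[OF assms])
  show ?thesis
    using card_image[OF inj_on_funpow_dist1[OF x]]
    by (simp add: perm_cycle_eq_orbit[OF assms] orbit_conv_funpow_dist1[OF x])
qed

lemma funpow_eq_self_iff_card_perm_cycle_dvd:
  assumes "permutation \<tau>"
  shows "(\<tau> ^^ j) x = x \<longleftrightarrow> card (perm_cycle \<tau> x) dvd j"
proof -
  define p where "p = funpow_dist1 \<tau> x x"
  have p: "(\<tau> ^^ p) x = x"
    unfolding p_def by (rule funpow_dist1_prop[OF permutation_self_in_orbit[OF assms]])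
  have "(\<tau> ^^ j) x = x \<longleftrightarrow> (\<tau> ^^ (j mod p)) x = x"
    using funpow_mod_eq[OF p] by simp
  also have "\<dots> \<longleftrightarrow> j mod p = 0"
    using funpow_dist1_least[of "j mod p" \<tau> x x] unfolding p_def
    by (metis funpow_0 mod_less_divisor neq0_conv zero_less_Suc)
  finally show ?thesis
    by (simp add: card_perm_cycle[OF assms] p_def dvd_eq_mod_eq_0)
qed

lemma card_perm_cycle_pos: "permutation \<tau> \<Longrightarrow> 0 < card (perm_cycle \<tau> x)"
  by (simp add: card_perm_cycle)

lemma dvd_mult_iff_div_gcd_dvd:
  fixes p k j :: nat
  assumes "0 < p"
  shows "p dvd k * j \<longleftrightarrow> p div gcd p k dvd j"
  using assms by (cases "k = 0") (simp_all add: div_dvd_iff_mult gcd_mult_distrib_nat mult.commute)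

lemma card_perm_cycle_funpow:
  assumes "permutation \<tau>"
  shows "card (perm_cycle (\<tau> ^^ k) x)
       = card (perm_cycle \<tau> x) div gcd (card (perm_cycle \<tau> x)) k"
proof -
  let ?p = "card (perm_cycle \<tau> x)"
  have "card (perm_cycle (\<tau> ^^ k) x) dvd j \<longleftrightarrow> ?p div gcd ?p k dvd j" for j
  proof -
    have "card (perm_cycle (\<tau> ^^ k) x) dvd j \<longleftrightarrow> ((\<tau> ^^ k) ^^ j) x = x"
      by (rule funpow_eq_self_iff_card_perm_cycle_dvd[OF permutation_funpow[OF assms], symmetric])
    also have "\<dots> \<longleftrightarrow> ?p dvd k * j"
      by (simp add: funpow_mult funpow_eq_self_iff_card_perm_cycle_dvd[OF assms])
    also have "\<dots> \<longleftrightarrow> ?p div gcd ?p k dvd j"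
      by (rule dvd_mult_iff_div_gcd_dvd[OF card_perm_cycle_pos[OF assms]])
    finally show ?thesis .
  qed
  from this[of "card (perm_cycle (\<tau> ^^ k) x)"] this[of "?p div gcd ?p k"] show ?thesis
    by (simp add: dvd_antisym)
qed

lemma perm_cycle_fiber:
  assumes "\<tau> permutes {..<n}" "x < n"
  shows "{y \<in> {..<n}. perm_cycle \<tau> y = perm_cycle \<tau> x} = perm_cycle \<tau> x"
proof -
  have "permutation \<tau>" using assms(1) by (auto simp: permutation_permutes)
  then show ?thesis
    using perm_cycle_subset[OF assms(1)] assms(2) perm_cycle_eqI self_in_perm_cycle by blast
qed

section \<open>Counting the cycles of a power\<close>

lemma sum_perm_cycles_eq_sum_elements:
  fixes h :: "nat \<Rightarrow> real"
  assumes "\<tau> permutes {..<n}"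
  shows "(\<Sum>C\<in>perm_cycles n \<tau>. h (card C))
       = (\<Sum>x<n. h (card (perm_cycle \<tau> x)) / card (perm_cycle \<tau> x))"
proof -
  let ?g = "\<lambda>x. h (card (perm_cycle \<tau> x)) / card (perm_cycle \<tau> x)"
  have "permutation \<tau>" using assms by (auto simp: permutation_permutes)
  have "(\<Sum>y\<in>{..<n}. ?g y)
      = (\<Sum>C\<in>perm_cycles n \<tau>. \<Sum>y\<in>{y \<in> {..<n}. perm_cycle \<tau> y = C}. ?g y)"
    unfolding perm_cycles_def by (rule sum.image_gen) simp
  also have "\<dots> = (\<Sum>C\<in>perm_cycles n \<tau>. h (card C))"
  proof (rule sum.cong[OF refl])
    fix C assume "C \<in> perm_cycles n \<tau>"
    then obtain x where x: "x < n" "C = perm_cycle \<tau> x" unfolding perm_cycles_def by auto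
    have "(\<Sum>y\<in>{y \<in> {..<n}. perm_cycle \<tau> y = C}. ?g y) = (\<Sum>y\<in>C. h (card C) / card C)"
      using perm_cycle_fiber[OF assms x(1)] perm_cycle_eqI[OF \<open>permutation \<tau>\<close>] x(2) by simp
    also have "\<dots> = h (card C)"
      using card_perm_cycle_pos[OF \<open>permutation \<tau>\<close>, of x] x(2) by simp
    finally show "(\<Sum>y\<in>{y \<in> {..<n}. perm_cycle \<tau> y = C}. ?g y) = h (card C)" .
  qed
  finally show ?thesis by simp
qed

lemma card_perm_cycles_funpow:
  assumes "\<tau> permutes {..<n}"
  shows "card (perm_cycles n (\<tau> ^^ k)) = (\<Sum>C\<in>perm_cycles n \<tau>. gcd (card C) k)"
proof -
  have \<tau>: "permutation \<tau>" using assms by (auto simp: permutation_permutes)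
  have "real (card (perm_cycles n (\<tau> ^^ k))) = (\<Sum>x<n. 1 / card (perm_cycle (\<tau> ^^ k) x))"
    using sum_perm_cycles_eq_sum_elements[OF permutes_funpow[OF assms], of "\<lambda>_. 1" k] by simp
  also have "\<dots> = (\<Sum>x<n. gcd (card (perm_cycle \<tau> x)) k / card (perm_cycle \<tau> x))"
    by (simp add: card_perm_cycle_funpow[OF \<tau>] real_of_nat_div)
  also have "\<dots> = (\<Sum>C\<in>perm_cycles n \<tau>. gcd (card C) k)"
    using sum_perm_cycles_eq_sum_elements[OF assms, of "\<lambda>c. gcd c k"] by simp
  finally show ?thesis by (simp only: of_nat_eq_iff flip: of_nat_sum)
qed

lemma sum_gcd_eq_sum_totient:
  fixes f :: "'a \<Rightarrow> nat"
  assumes "finite A" "0 < k"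
  shows "(\<Sum>a\<in>A. gcd (f a) k) = (\<Sum>e | e dvd k. totient e * card {a \<in> A. e dvd f a})"
proof -
  have "(\<Sum>a\<in>A. gcd (f a) k) = (\<Sum>a\<in>A. \<Sum>e\<in>{e. e dvd k \<and> e dvd f a}. totient e)"
  proof (rule sum.cong[OF refl])
    fix a
    have "{e. e dvd gcd (f a) k} = {e. e dvd k \<and> e dvd f a}" by auto
    then show "gcd (f a) k = (\<Sum>e\<in>{e. e dvd k \<and> e dvd f a}. totient e)"
      using totient_divisor_sum[of "gcd (f a) k"] by simp
  qed
  also have "\<dots> = (\<Sum>e | e dvd k. \<Sum>a\<in>{a \<in> A. e dvd f a}. totient e)"
    using sum.swap_restrict[OF assms(1), of "{e. e dvd k}" "\<lambda>_ e. totient e" "\<lambda>a e. e dvd f a"] assms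
    by simp
  finally show ?thesis by (simp add: mult.commute)
qed

lemma card_perm_cycles_funpow_eq_sum_totient:
  assumes "\<tau> permutes {..<n}" "0 < k"
  shows "card (perm_cycles n (\<tau> ^^ k)) = (\<Sum>e | e dvd k. totient e * m_cycles n e \<tau>)"
proof -
  have "finite (perm_cycles n \<tau>)" by (simp add: perm_cycles_def)
  from sum_gcd_eq_sum_totient[OF this assms(2), of card] show ?thesis
    by (simp add: card_perm_cycles_funpow[OF assms(1)] m_cycles_def)
qed

lemma divisor_sums_eq_imp_eq:
  fixes w f g :: "nat \<Rightarrow> nat"
  assumes w: "\<And>d. 0 < d \<Longrightarrow> 0 < w d"
    and sums: "\<And>k. 0 < k \<Longrightarrow> (\<Sum>e | e dvd k. w e * f e) = (\<Sum>e | e dvd k. w e * g e)"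
  shows "0 < d \<Longrightarrow> f d = g d"
proof (induction d rule: less_induct)
  case (less d)
  let ?D = "{e. e dvd d}"
  have fin: "finite ?D" and d: "d \<in> ?D" using less.prems by auto
  have "(\<Sum>e\<in>?D - {d}. w e * f e) = (\<Sum>e\<in>?D - {d}. w e * g e)"
  proof (rule sum.cong[OF refl])
    fix e assume "e \<in> ?D - {d}"
    then have "e dvd d" "e \<noteq> d" by auto
    then have "0 < e" "e < d"
      using less.prems dvd_imp_le[of e d] by (auto intro: gr0I)
    then show "w e * f e = w e * g e" using less.IH by simp
  qed
  moreover have "(\<Sum>e\<in>?D. w e * f e) = (\<Sum>e\<in>?D. w e * g e)" by (rule sums[OF less.prems])
  ultimately have "w d * f d = w d * g d" by (simp add: sum.remove[OF fin d])
  then show ?case using w[OF less.prems] by simp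
qed

section \<open>Permutation matrices\<close>

lemma perm_mat_carrier: "perm_mat n \<pi> \<in> carrier_mat n n"
  by (simp add: perm_mat_def)

lemma perm_mat_mult:
  assumes "\<sigma> ` {..<n} \<subseteq> {..<n}"
  shows "perm_mat n \<pi> * perm_mat n \<sigma> = (perm_mat n (\<pi> \<circ> \<sigma>) :: 'a :: field mat)"
proof (rule eq_matI)
  fix i j
  assume "i < dim_row (perm_mat n (\<pi> \<circ> \<sigma>) :: 'a mat)" "j < dim_col (perm_mat n (\<pi> \<circ> \<sigma>) :: 'a mat)"
  then have ij: "i < n" "j < n" by (auto simp: perm_mat_def)
  then have "(perm_mat n \<pi> * perm_mat n \<sigma> :: 'a mat) $$ (i, j)
      = (\<Sum>l\<in>{0..<n}. (if i = \<pi> l then 1 else 0) * (if l = \<sigma> j then 1 else 0))"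
    by (simp add: perm_mat_def scalar_prod_def)
  also have "\<dots> = (\<Sum>l\<in>{0..<n}. if l = \<sigma> j then (if i = \<pi> l then 1 else 0) else 0)"
    by (rule sum.cong) auto
  also have "\<dots> = (perm_mat n (\<pi> \<circ> \<sigma>) :: 'a mat) $$ (i, j)"
    using assms ij by (auto simp: perm_mat_def sum.delta)
  finally show "(perm_mat n \<pi> * perm_mat n \<sigma> :: 'a mat) $$ (i, j)
      = (perm_mat n (\<pi> \<circ> \<sigma>) :: 'a mat) $$ (i, j)" .
qed (auto simp: perm_mat_def)

lemma perm_mat_pow:
  assumes "\<pi> permutes {..<n}"
  shows "(perm_mat n \<pi> :: 'a :: field mat) ^\<^sub>m k = perm_mat n (\<pi> ^^ k)"
proof (induction k)
  case 0
  show ?case by (rule eq_matI) (auto simp: perm_mat_def)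
next
  case (Suc k)
  have "\<pi> ` {..<n} \<subseteq> {..<n}" using permutes_image[OF assms] by simp
  have "(perm_mat n \<pi> :: 'a mat) ^\<^sub>m Suc k = perm_mat n (\<pi> ^^ k) * perm_mat n \<pi>"
    using Suc by simp
  also have "\<dots> = perm_mat n (\<pi> ^^ Suc k)"
    by (simp only: perm_mat_mult[OF \<open>\<pi> ` {..<n} \<subseteq> {..<n}\<close>] funpow_Suc_right)
  finally show ?case .
qed

lemma perm_mat_mult_vec_index:
  assumes "\<tau> permutes {..<n}" "v \<in> carrier_vec n" "i < n"
  shows "(perm_mat n \<tau> *\<^sub>v v) $ i = v $ inv_into UNIV \<tau> i"
proof -
  have "(perm_mat n \<tau> *\<^sub>v v) $ i = (\<Sum>j\<in>{0..<n}. (if i = \<tau> j then 1 else 0) * v $ j)"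
    using assms(2,3) by (simp add: perm_mat_def scalar_prod_def)
  also have "\<dots> = (\<Sum>j\<in>{0..<n}. if j = inv_into UNIV \<tau> i then v $ j else 0)"
  proof (rule sum.cong[OF refl])
    fix j
    have "i = \<tau> j \<longleftrightarrow> j = inv_into UNIV \<tau> i"
      using permutes_inv_eq[OF assms(1), of i j] by auto
    then show "(if i = \<tau> j then 1 else 0) * v $ j = (if j = inv_into UNIV \<tau> i then v $ j else 0)"
      by simp
  qed
  also have "\<dots> = v $ inv_into UNIV \<tau> i"
    using permutes_in_image[OF permutes_inv[OF assms(1)]] assms(3) by (simp add: sum.delta)
  finally show ?thesis .
qed

lemma char_matrix_one_mult_vec:
  fixes A :: "'a :: field mat"
  assumes "A \<in> carrier_mat n n" "v \<in> carrier_vec n"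
  shows "char_matrix A 1 *\<^sub>v v = A *\<^sub>v v - v"
proof -
  have "((-1) \<cdot>\<^sub>m 1\<^sub>m n) *\<^sub>v v = - v"
    using assms(2)
    by (intro eq_vecI)
      (auto simp: scalar_prod_def sum_negf if_distrib[of "\<lambda>x. x * _"] sum.delta cong: if_cong)
  then show ?thesis
    using assms unfolding char_matrix_def
    by (simp add: add_mult_distrib_mat_vec[of _ n n] minus_add_uminus_vec[of _ n])
qed

lemma mat_kernel_char_perm_mat:
  assumes "\<tau> permutes {..<n}"
  shows "mat_kernel (char_matrix (perm_mat n \<tau> :: 'a :: field mat) 1)
       = {v \<in> carrier_vec n. \<forall>j<n. v $ \<tau> j = v $ j}"
proof -
  let ?C = "char_matrix (perm_mat n \<tau> :: 'a mat) 1"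
  have "?C *\<^sub>v v = 0\<^sub>v n \<longleftrightarrow> (\<forall>j<n. v $ \<tau> j = v $ j)" if v: "v \<in> carrier_vec n" for v
  proof -
    have "?C *\<^sub>v v = perm_mat n \<tau> *\<^sub>v v - v"
      by (rule char_matrix_one_mult_vec[OF perm_mat_carrier v])
    then have "?C *\<^sub>v v = 0\<^sub>v n \<longleftrightarrow> (\<forall>i<n. (perm_mat n \<tau> *\<^sub>v v) $ i - v $ i = 0)"
      using v by (auto simp: vec_eq_iff perm_mat_def)
    also have "\<dots> \<longleftrightarrow> (\<forall>i<n. v $ inv_into UNIV \<tau> i = v $ i)"
      using perm_mat_mult_vec_index[OF assms v] by simp
    also have "\<dots> \<longleftrightarrow> (\<forall>j\<in>inv_into UNIV \<tau> ` {..<n}. v $ j = v $ \<tau> j)"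
      by (auto simp: permutes_inverses(1)[OF assms])
    also have "inv_into UNIV \<tau> ` {..<n} = {..<n}"
      by (rule permutes_image[OF permutes_inv[OF assms]])
    finally show ?thesis by auto
  qed
  then show ?thesis by (auto simp: mat_kernel_def perm_mat_def char_matrix_def)
qed

definition indicator_vec :: "nat \<Rightarrow> nat set \<Rightarrow> 'a :: zero_neq_one vec" where
  "indicator_vec n S = vec n (\<lambda>i. if i \<in> S then 1 else 0)"

lemma inj_on_indicator_vec: "inj_on (indicator_vec n :: nat set \<Rightarrow> 'a :: zero_neq_one vec) (Pow {..<n})"
proof (rule inj_onI)
  fix S T assume "S \<in> Pow {..<n}" "T \<in> Pow {..<n}"
    and eq: "(indicator_vec n S :: 'a vec) = indicator_vec n T"
  have "i \<in> S \<longleftrightarrow> i \<in> T" if "i < n" for i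
    using arg_cong[OF eq, of "\<lambda>v. v $ i"] that by (auto simp: indicator_vec_def split: if_splits)
  then show "S = T" using \<open>S \<in> Pow {..<n}\<close> \<open>T \<in> Pow {..<n}\<close> by blast
qed

lemma invariant_vec_const_on_perm_cycle:
  assumes "\<tau> permutes {..<n}" "\<forall>j<n. v $ \<tau> j = v $ j" "x < n" "y \<in> perm_cycle \<tau> x"
  shows "v $ y = v $ x"
proof -
  obtain k where y: "y = (\<tau> ^^ k) x" using assms(4) unfolding perm_cycle_def by auto
  have "(\<tau> ^^ k) x < n \<and> v $ (\<tau> ^^ k) x = v $ x"
  proof (induction k)
    case (Suc k)
    then show ?case using assms(2) permutes_in_image[OF assms(1)] by simp
  qed (use assms(3) in simp)
  then show ?thesis using y by simp
qed

lemma perm_cycle_indicators_in_kernel: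
  assumes "\<tau> permutes {..<n}"
  shows "indicator_vec n ` perm_cycles n \<tau>
           \<subseteq> mat_kernel (char_matrix (perm_mat n \<tau> :: 'a :: field mat) 1)"
proof -
  have "permutation \<tau>" using assms by (auto simp: permutation_permutes)
  then show ?thesis
    using mem_perm_cycle_iff perm_cycle_apply permutes_in_image[OF assms]
    by (auto simp: perm_cycles_def mat_kernel_char_perm_mat[OF assms] indicator_vec_def)
qed

lemma lincomb_perm_cycle_indicators_index:
  assumes "\<tau> permutes {..<n}" "j < n"
  shows "kernel.lincomb n (char_matrix (perm_mat n \<tau> :: 'a :: field mat) 1) a
           (indicator_vec n ` perm_cycles n \<tau>) $ j
       = a (indicator_vec n (perm_cycle \<tau> j))"
proof -
  let ?ind = "indicator_vec n :: nat set \<Rightarrow> 'a vec"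
  interpret K: kernel n n "char_matrix (perm_mat n \<tau> :: 'a mat) 1"
    by unfold_locales (simp add: perm_mat_carrier)
  have \<tau>: "permutation \<tau>" using assms by (auto simp: permutation_permutes)
  have "perm_cycles n \<tau> \<subseteq> Pow {..<n}"
    using perm_cycle_subset[OF assms(1)] by (auto simp: perm_cycles_def)
  then have inj: "inj_on ?ind (perm_cycles n \<tau>)"
    by (rule inj_on_subset[OF inj_on_indicator_vec])
  have "K.lincomb a (?ind ` perm_cycles n \<tau>) $ j = (\<Sum>b\<in>?ind ` perm_cycles n \<tau>. a b * b $ j)"
    by (rule K.lincomb_index[OF assms(2) perm_cycle_indicators_in_kernel[OF assms(1)]])
  also have "\<dots> = (\<Sum>C\<in>perm_cycles n \<tau>. a (?ind C) * ?ind C $ j)"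
    by (rule sum.reindex[OF inj, unfolded comp_def])
  also have "\<dots> = (\<Sum>C\<in>perm_cycles n \<tau>. if C = perm_cycle \<tau> j then a (?ind C) else 0)"
    using assms(2) mem_perm_cycle_iff[OF \<tau>]
    by (intro sum.cong) (auto simp: indicator_vec_def perm_cycles_def)
  also have "\<dots> = a (?ind (perm_cycle \<tau> j))"
    using assms(2) by (simp add: perm_cycles_def)
  finally show ?thesis .
qed


lemma perm_cycle_indicators_basis:
  assumes "\<tau> permutes {..<n}"
  shows "kernel.basis n (char_matrix (perm_mat n \<tau> :: 'a :: field mat) 1)
           (indicator_vec n ` perm_cycles n \<tau>)"
proof -
  let ?C = "char_matrix (perm_mat n \<tau> :: 'a mat) 1"
  let ?ind = "indicator_vec n :: nat set \<Rightarrow> 'a vec"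
  define B where "B = ?ind ` perm_cycles n \<tau>"
  interpret K: kernel n n ?C by unfold_locales (simp add: perm_mat_carrier)
  have fin: "finite B" unfolding B_def perm_cycles_def by simp
  have B_ker: "B \<subseteq> mat_kernel ?C"
    unfolding B_def by (rule perm_cycle_indicators_in_kernel[OF assms])
  note lincomb = lincomb_perm_cycle_indicators_index[OF assms, where 'a = 'a, folded B_def]
  have "K.lin_indpt B"
  proof (rule K.Ker.finite_lin_indpt2[OF fin B_ker])
    fix a assume "K.lincomb a B = 0\<^sub>v n"
    then show "\<forall>b\<in>B. a b = 0"
      using lincomb by (auto simp: B_def perm_cycles_def vec_eq_iff)
  qed
  moreover have "mat_kernel ?C \<subseteq> K.span B"
  proof
    fix v assume "v \<in> mat_kernel ?C"
    then have v: "v \<in> carrier_vec n" "\<forall>j<n. v $ \<tau> j = v $ j"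
      by (auto simp: mat_kernel_char_perm_mat[OF assms])
    define a where "a b = v $ (SOME i. i < n \<and> b $ i = 1)" for b :: "'a vec"
    have "a (?ind (perm_cycle \<tau> j)) = v $ j" if "j < n" for j
    proof -
      have "\<exists>i. i < n \<and> ?ind (perm_cycle \<tau> j) $ i = 1"
        using that self_in_perm_cycle by (auto simp: indicator_vec_def)
      from someI_ex[OF this] show ?thesis
        using invariant_vec_const_on_perm_cycle[OF assms v(2) that]
        by (auto simp: a_def indicator_vec_def split: if_splits)
    qed
    moreover have "K.lincomb a B \<in> carrier_vec n"
      using K.Ker.lincomb_closed[OF B_ker] mat_kernel_carrier[of ?C n n]
      by (auto simp: perm_mat_carrier)
    ultimately have "v = K.lincomb a B"
      using v(1) lincomb by (intro eq_vecI) auto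
    then show "v \<in> K.span B" using fin unfolding K.Ker.span_def by auto
  qed
  ultimately show ?thesis
    using B_ker K.Ker.span_is_subset2 by (auto simp: K.Ker.basis_def B_def)
qed

lemma kernel_dim_char_perm_mat:
  assumes "\<tau> permutes {..<n}"
  shows "kernel.dim n (char_matrix (perm_mat n \<tau> :: 'a :: field mat) 1) = card (perm_cycles n \<tau>)"
proof -
  interpret K: kernel n n "char_matrix (perm_mat n \<tau> :: 'a mat) 1"
    by unfold_locales (simp add: perm_mat_carrier)
  have "perm_cycles n \<tau> \<subseteq> Pow {..<n}"
    using perm_cycle_subset[OF assms] by (auto simp: perm_cycles_def)
  then have "inj_on (indicator_vec n :: nat set \<Rightarrow> 'a vec) (perm_cycles n \<tau>)"
    by (rule inj_on_subset[OF inj_on_indicator_vec])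
  moreover have "finite (indicator_vec n ` perm_cycles n \<tau> :: 'a vec set)"
    by (simp add: perm_cycles_def)
  then have "K.dim = card (indicator_vec n ` perm_cycles n \<tau> :: 'a vec set)"
    by (rule K.Ker.dim_basis[OF _ perm_cycle_indicators_basis[OF assms]])
  ultimately show ?thesis by (simp add: card_image)
qed


lemma similar_perm_mat_card_perm_cycles:
  assumes "\<pi> permutes {..<n}" "\<sigma> permutes {..<n}"
    and "similar_mat (perm_mat n \<pi> :: 'a :: field mat) (perm_mat n \<sigma>)"
  shows "card (perm_cycles n \<pi>) = card (perm_cycles n \<sigma>)"
proof -
  from assms(3) obtain P Q where "similar_mat_wit (perm_mat n \<pi> :: 'a mat) (perm_mat n \<sigma>) P Q"
    by (auto simp: similar_mat_def)
  then have "similar_mat_wit (char_matrix (perm_mat n \<pi> :: 'a mat) 1)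
      (char_matrix (perm_mat n \<sigma>) 1) P Q"
    by (rule similar_mat_wit_char_matrix)
  then have "kernel.dim n (char_matrix (perm_mat n \<pi> :: 'a mat) 1)
           = kernel.dim n (char_matrix (perm_mat n \<sigma> :: 'a mat) 1)"
    by (rule similar_mat_wit_kernel_dim[OF char_matrix_closed[OF perm_mat_carrier]])
  then show ?thesis by (simp add: kernel_dim_char_perm_mat assms(1,2))
qed

lemma similar_perm_mat_funpow:
  assumes "\<pi> permutes {..<n}" "\<sigma> permutes {..<n}"
    and "similar_mat (perm_mat n \<pi> :: 'a :: field mat) (perm_mat n \<sigma>)"
  shows "similar_mat (perm_mat n (\<pi> ^^ k) :: 'a mat) (perm_mat n (\<sigma> ^^ k))"
  using assms similar_mat_wit_pow
  by (fastforce simp: similar_mat_def perm_mat_pow[symmetric])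

theorem claim2p4:
  fixes \<pi> \<sigma> :: "nat \<Rightarrow> nat" and n d :: nat
  assumes "\<pi> permutes {..<n}" and "\<sigma> permutes {..<n}"
    and "similar_mat (perm_mat n \<pi> :: 'a :: field mat) (perm_mat n \<sigma>)"
    and "d \<ge> 1"
  shows "m_cycles n d \<pi> = m_cycles n d \<sigma>"
proof (rule divisor_sums_eq_imp_eq[where w = totient and f = "\<lambda>e. m_cycles n e \<pi>"
      and g = "\<lambda>e. m_cycles n e \<sigma>"])
  fix k :: nat assume "0 < k"
  have "card (perm_cycles n (\<pi> ^^ k)) = card (perm_cycles n (\<sigma> ^^ k))"
    using similar_perm_mat_card_perm_cycles[OF permutes_funpow permutes_funpow
        similar_perm_mat_funpow[OF assms(1-3)]] assms(1,2) .
  then show "(\<Sum>e | e dvd k. totient e * m_cycles n e \<pi>)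
      = (\<Sum>e | e dvd k. totient e * m_cycles n e \<sigma>)"
    by (simp add: card_perm_cycles_funpow_eq_sum_totient[OF _ \<open>0 < k\<close>] assms(1,2))
qed (use assms(4) in auto)

end
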